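(* Let $\lambda>0$, let $\boldsymbol\alpha^\star$ be the optimal solution of the dual problem $\max_{\boldsymbol\alpha\ge\mathbf0}D_\lambda(\boldsymbol\alpha)$ and $\mathbf m^\star$ the optimal solution of the primal problem $\min_{\mathbf m\ge\mathbf0}P_\lambda(\mathbf m)$. Suppose $\mathbf q\in\mathbb R^{2nK}$ and $r\ge0$ satisfy $\|\boldsymbol\alpha^\star-\mathbf q\|_2^2\le r^2$. Then for every $k\in[p]$, $$\mathbf C_{k,:}\mathbf q+r\|\mathbf C_{k,:}\|_2\le\lambda\ \Longrightarrow\ m_k^\star=0.$$
   Context: Let $n,K,p\ge1$ be integers, $[n]=\{1,\dots,n\}$. For each $i\in[n]$ let $\mathbf x_i\in\mathbb R^p$ have nonnegative entries and let $\mathcal D_i,\mathcal S_i\subseteq[n]$ be sets of size $K$. Put $\mathbf c_{ij}=(\mathbf x_i-\mathbf x_j)\circ(\mathbf x_i-\mathbf x_j)$ (entrywise product). Vectors in $\mathbb R^{2nK}$ are indexed by the pairs $(i,l)$, $l\in\mathcal D_i$ ("different-class pairs") and $(i,j)$, $j\in\mathcal S_i$ ("same-class pairs"). $\mathbf C\in\mathbb R^{p\times2nK}$ has column $\mathbf c_{il}$ for each different-class pair and $-\mathbf c_{ij}$ for each same-class pair; $\mathbf C_{k,:}$ is its $k$-th row. Fix $L\ge U\ge0$, $\eta>0$; let $\mathbf t\in\mathbb R^{2nK}$ have entry $L$ at different-class pairs and $-U$ at same-class pairs; $\ell_s(x)=([s-x]_+)^2$ with $[z]_+=\max\{z,0\}$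 (entrywise for vectors); $\mathbf1$ is the all-ones vector. For $\lambda>0$ define on $\mathbf m\in\mathbb R^p_{\ge0}$ $$P_\lambda(\mathbf m)=\sum_{i\in[n]}\Big[\sum_{l\in\mathcal D_i}\ell_L(\mathbf m^\top\mathbf c_{il})+\sum_{j\in\mathcal S_i}\ell_{-U}(-\mathbf m^\top\mathbf c_{ij})\Big]+\lambda\Big(\mathbf m^\top\mathbf1+\frac\eta2\|\mathbf m\|_2^2\Big),$$ and on $\boldsymbol\alpha\in\mathbb R^{2nK}_{\ge0}$ $$D_\lambda(\boldsymbol\alpha)=-\frac14\|\boldsymbol\alpha\|_2^2+\mathbf t^\top\boldsymbol\alpha-\frac{\lambda\eta}2\|\mathbf m_\lambda(\boldsymbol\alpha)\|_2^2,\qquad\mathbf m_\lambda(\boldsymbol\alpha)=\frac1{\lambda\eta}[\mathbf C\boldsymbol\alpha-\lambda\mathbf1]_+.$$ *)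

theory Defs
  imports Complex_Main
begin

text \<open>Data: points x i (i in {1..n}) with coordinates x i k (k in {1..p});
  D i, S i are the different-class / same-class neighbour sets.
  Pairs are indexed by Inl (i,l) (different-class, l in D i) and
  Inr (i,j) (same-class, j in S i).\<close>

type_synonym pidx = "(nat \<times> nat) + (nat \<times> nat)"

definition pospart :: "real \<Rightarrow> real" where
  "pospart z = max z 0"

definition ell :: "real \<Rightarrow> real \<Rightarrow> real" where
  "ell s z = (pospart (s - z))\<^sup>2"

definition cvec :: "(nat \<Rightarrow> nat \<Rightarrow> real) \<Rightarrow> nat \<Rightarrow> nat \<Rightarrow> nat \<Rightarrow> real" where
  "cvec x i j k = (x i k - x j k) * (x i k - x j k)"

definition pairs :: "nat \<Rightarrow> (nat \<Rightarrow> nat set) \<Rightarrow> (nat \<Rightarrow> nat set) \<Rightarrow> pidx set" where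
  "pairs n D S = {Inl (i, l) | i l. i \<in> {1..n} \<and> l \<in> D i}
              \<union> {Inr (i, j) | i j. i \<in> {1..n} \<and> j \<in> S i}"

definition Cmat :: "(nat \<Rightarrow> nat \<Rightarrow> real) \<Rightarrow> nat \<Rightarrow> pidx \<Rightarrow> real" where
  "Cmat x k a = (case a of Inl (i, l) \<Rightarrow> cvec x i l k | Inr (i, j) \<Rightarrow> - cvec x i j k)"

definition tvec :: "real \<Rightarrow> real \<Rightarrow> pidx \<Rightarrow> real" where
  "tvec L U a = (case a of Inl _ \<Rightarrow> L | Inr _ \<Rightarrow> - U)"

definition Pobj :: "nat \<Rightarrow> nat \<Rightarrow> (nat \<Rightarrow> nat \<Rightarrow> real) \<Rightarrow> (nat \<Rightarrow> nat set) \<Rightarrow> (nat \<Rightarrow> nat set)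
    \<Rightarrow> real \<Rightarrow> real \<Rightarrow> real \<Rightarrow> real \<Rightarrow> (nat \<Rightarrow> real) \<Rightarrow> real" where
  "Pobj n p x D S L U \<eta> lam m =
     (\<Sum>i\<in>{1..n}. (\<Sum>l\<in>D i. ell L (\<Sum>k\<in>{1..p}. m k * cvec x i l k))
                 + (\<Sum>j\<in>S i. ell (- U) (- (\<Sum>k\<in>{1..p}. m k * cvec x i j k))))
     + lam * ((\<Sum>k\<in>{1..p}. m k) + \<eta> / 2 * (\<Sum>k\<in>{1..p}. (m k)\<^sup>2))"

definition mlam :: "nat \<Rightarrow> (nat \<Rightarrow> nat \<Rightarrow> real) \<Rightarrow> (nat \<Rightarrow> nat set) \<Rightarrow> (nat \<Rightarrow> nat set)
    \<Rightarrow> real \<Rightarrow> real \<Rightarrow> (pidx \<Rightarrow> real) \<Rightarrow> nat \<Rightarrow> real" where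
  "mlam n x D S \<eta> lam \<alpha> k =
     1 / (lam * \<eta>) * pospart ((\<Sum>a\<in>pairs n D S. Cmat x k a * \<alpha> a) - lam)"

definition Dobj :: "nat \<Rightarrow> nat \<Rightarrow> (nat \<Rightarrow> nat \<Rightarrow> real) \<Rightarrow> (nat \<Rightarrow> nat set) \<Rightarrow> (nat \<Rightarrow> nat set)
    \<Rightarrow> real \<Rightarrow> real \<Rightarrow> real \<Rightarrow> real \<Rightarrow> (pidx \<Rightarrow> real) \<Rightarrow> real" where
  "Dobj n p x D S L U \<eta> lam \<alpha> =
     - 1 / 4 * (\<Sum>a\<in>pairs n D S. (\<alpha> a)\<^sup>2)
     + (\<Sum>a\<in>pairs n D S. tvec L U a * \<alpha> a)
     - lam * \<eta> / 2 * (\<Sum>k\<in>{1..p}. (mlam n x D S \<eta> lam \<alpha> k)\<^sup>2)"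

end

(*
  Both problems are coupled through the Lagrangian
    L(m, \<alpha>) = \<Sum>_a (\<alpha>_a s_a(m) - \<alpha>_a^2/4) + \<lambda> (\<Sum>_k m_k + \<eta>/2 |m|^2),   s(m) = t - C'm.
  Since [s]_+^2 = max_{\<alpha> \<ge> 0} (\<alpha> s - \<alpha>^2/4), attained at \<alpha> = 2[s]_+, P(m) = max_{\<alpha> \<ge> 0} L(m, \<alpha>).
  Minimising L over m \<ge> 0 coordinatewise gives D(\<alpha>), attained at m_\<lambda>(\<alpha>), and since L(-, \<alpha>) is
  \<lambda>\<eta>-strongly convex, D(\<alpha>) + \<lambda>\<eta>/2 |m - m_\<lambda>(\<alpha>)|^2 \<le> P(m) for all m, \<alpha> \<ge> 0.
  The first-order conditions at the primal minimiser m\<^sup>\<star> say m\<^sup>\<star> = m_\<lambda>(2[s(m\<^sup>\<star>)]_+), so strong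
  duality holds and the gap inequality forces m\<^sup>\<star> = m_\<lambda>(\<alpha>\<^sup>\<star>).  Finally, by Cauchy-Schwarz,
  C_k \<alpha>\<^sup>\<star> \<le> C_k q + r |C_k| \<le> \<lambda>, hence m\<^sup>\<star>_k = [C_k \<alpha>\<^sup>\<star> - \<lambda>]_+ / (\<lambda>\<eta>) = 0.
*)
theory Submission
  imports Defs "HOL-Analysis.L2_Norm"
begin

definition slack :: "('b \<Rightarrow> 'a \<Rightarrow> real) \<Rightarrow> ('a \<Rightarrow> real) \<Rightarrow> 'b set \<Rightarrow> ('b \<Rightarrow> real) \<Rightarrow> 'a \<Rightarrow> real" where
  "slack C t B m a = t a - (\<Sum>k\<in>B. C k a * m k)"

definition primal_obj :: "('b \<Rightarrow> 'a \<Rightarrow> real) \<Rightarrow> ('a \<Rightarrow> real) \<Rightarrow> 'a set \<Rightarrow> 'b set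
    \<Rightarrow> real \<Rightarrow> real \<Rightarrow> ('b \<Rightarrow> real) \<Rightarrow> real" where
  "primal_obj C t A B lam \<eta> m =
     (\<Sum>a\<in>A. (pospart (slack C t B m a))\<^sup>2) + lam * ((\<Sum>k\<in>B. m k) + \<eta> / 2 * (\<Sum>k\<in>B. (m k)\<^sup>2))"

definition dual_point :: "('b \<Rightarrow> 'a \<Rightarrow> real) \<Rightarrow> 'a set \<Rightarrow> real \<Rightarrow> real \<Rightarrow> ('a \<Rightarrow> real) \<Rightarrow> 'b \<Rightarrow> real" where
  "dual_point C A lam \<eta> \<alpha> k = pospart ((\<Sum>a\<in>A. C k a * \<alpha> a) - lam) / (lam * \<eta>)"

definition dual_obj :: "('b \<Rightarrow> 'a \<Rightarrow> real) \<Rightarrow> ('a \<Rightarrow> real) \<Rightarrow> 'a set \<Rightarrow> 'b set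
    \<Rightarrow> real \<Rightarrow> real \<Rightarrow> ('a \<Rightarrow> real) \<Rightarrow> real" where
  "dual_obj C t A B lam \<eta> \<alpha> =
     - 1 / 4 * (\<Sum>a\<in>A. (\<alpha> a)\<^sup>2) + (\<Sum>a\<in>A. t a * \<alpha> a)
     - lam * \<eta> / 2 * (\<Sum>k\<in>B. (dual_point C A lam \<eta> \<alpha> k)\<^sup>2)"

definition lagrangian :: "('b \<Rightarrow> 'a \<Rightarrow> real) \<Rightarrow> ('a \<Rightarrow> real) \<Rightarrow> 'a set \<Rightarrow> 'b set
    \<Rightarrow> real \<Rightarrow> real \<Rightarrow> ('b \<Rightarrow> real) \<Rightarrow> ('a \<Rightarrow> real) \<Rightarrow> real" where
  "lagrangian C t A B lam \<eta> m \<alpha> =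
     (\<Sum>a\<in>A. \<alpha> a * slack C t B m a - (\<alpha> a)\<^sup>2 / 4) + lam * ((\<Sum>k\<in>B. m k) + \<eta> / 2 * (\<Sum>k\<in>B. (m k)\<^sup>2))"

lemma pospart_sq_ge:
  assumes "0 \<le> \<alpha>"
  shows "\<alpha> * s - \<alpha>\<^sup>2 / 4 \<le> (pospart s)\<^sup>2"
proof -
  have "0 \<le> (pospart s - \<alpha> / 2)\<^sup>2 + \<alpha> * (pospart s - s)"
    using assms by (simp add: pospart_def)
  then show ?thesis by (simp add: power2_eq_square algebra_simps)
qed

lemma pospart_sq_eq: "2 * pospart s * s - (2 * pospart s)\<^sup>2 / 4 = (pospart s)\<^sup>2"
  by (simp add: pospart_def power2_eq_square split: split_max)

lemma pospart_sq_diff_le: "(pospart (s - h))\<^sup>2 \<le> (pospart s)\<^sup>2 - 2 * h * pospart s + h\<^sup>2"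
proof (cases "s - h \<le> 0")
  case True
  have "0 \<le> (pospart s - h)\<^sup>2" by simp
  with True show ?thesis by (simp add: pospart_def power2_eq_square algebra_simps)
next
  case False
  show ?thesis
  proof (cases "0 \<le> s")
    case True
    with False show ?thesis by (simp add: pospart_def power2_eq_square algebra_simps)
  next
    case s_neg: False
    have "(s - h)\<^sup>2 \<le> (- h)\<^sup>2"
      using False s_neg by (intro power_mono) auto
    with False s_neg show ?thesis by (simp add: pospart_def)
  qed
qed

lemma quadratic_ge_nonneg_min:
  assumes "0 < c" "0 \<le> m"
  shows "- c / 2 * (pospart v / c)\<^sup>2 + c / 2 * (m - pospart v / c)\<^sup>2 \<le> c / 2 * m\<^sup>2 - v * m"
proof (cases "0 \<le> v")
  case True
  with assms show ?thesis by (simp add: pospart_def power2_eq_square field_simps)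
next
  case False
  with assms have "v * m \<le> 0" by (simp add: mult_nonpos_nonneg)
  with False show ?thesis by (simp add: pospart_def mult.commute)
qed

lemma quadratic_at_nonneg_min:
  assumes "0 < c"
  shows "c / 2 * (pospart v / c)\<^sup>2 - v * (pospart v / c) = - c / 2 * (pospart v / c)\<^sup>2"
  using assms by (cases "0 \<le> v") (simp_all add: pospart_def power2_eq_square field_simps)

lemma lagrangian_le_primal_obj:
  assumes "\<forall>a\<in>A. 0 \<le> \<alpha> a"
  shows "lagrangian C t A B lam \<eta> m \<alpha> \<le> primal_obj C t A B lam \<eta> m"
  unfolding lagrangian_def primal_obj_def
  using assms by (simp add: sum_mono pospart_sq_ge)

lemma lagrangian_eq_primal_obj:
  "lagrangian C t A B lam \<eta> m (\<lambda>a. 2 * pospart (slack C t B m a)) = primal_obj C t A B lam \<eta> m"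
  unfolding lagrangian_def primal_obj_def pospart_sq_eq ..

lemma lagrangian_eq_sum_coordinates:
  "lagrangian C t A B lam \<eta> m \<alpha> =
     (\<Sum>a\<in>A. t a * \<alpha> a) - 1 / 4 * (\<Sum>a\<in>A. (\<alpha> a)\<^sup>2)
     + (\<Sum>k\<in>B. lam * \<eta> / 2 * (m k)\<^sup>2 - ((\<Sum>a\<in>A. C k a * \<alpha> a) - lam) * m k)"
proof -
  have swap: "(\<Sum>a\<in>A. \<alpha> a * (\<Sum>k\<in>B. C k a * m k)) = (\<Sum>k\<in>B. (\<Sum>a\<in>A. C k a * \<alpha> a) * m k)"
    by (simp add: sum_distrib_left sum_distrib_right mult_ac) (rule sum.swap)
  have "lagrangian C t A B lam \<eta> m \<alpha> =
      (\<Sum>a\<in>A. t a * \<alpha> a) - (\<Sum>a\<in>A. \<alpha> a * (\<Sum>k\<in>B. C k a * m k))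
      - 1 / 4 * (\<Sum>a\<in>A. (\<alpha> a)\<^sup>2) + lam * ((\<Sum>k\<in>B. m k) + \<eta> / 2 * (\<Sum>k\<in>B. (m k)\<^sup>2))"
    unfolding lagrangian_def slack_def
    by (simp add: sum_subtractf right_diff_distrib sum_divide_distrib mult.commute)
  moreover have "(\<Sum>k\<in>B. lam * \<eta> / 2 * (m k)\<^sup>2 - ((\<Sum>a\<in>A. C k a * \<alpha> a) - lam) * m k) =
      lam * \<eta> / 2 * (\<Sum>k\<in>B. (m k)\<^sup>2) - (\<Sum>k\<in>B. (\<Sum>a\<in>A. C k a * \<alpha> a) * m k)
      + lam * (\<Sum>k\<in>B. m k)"
    by (simp add: sum_subtractf left_diff_distrib sum.distrib sum_distrib_left)
  ultimately show ?thesis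
    unfolding swap by (simp add: algebra_simps)
qed

lemma dual_obj_gap_le_lagrangian:
  assumes "0 < lam" "0 < \<eta>" "\<forall>k\<in>B. 0 \<le> m k"
  shows "dual_obj C t A B lam \<eta> \<alpha> + lam * \<eta> / 2 * (\<Sum>k\<in>B. (m k - dual_point C A lam \<eta> \<alpha> k)\<^sup>2)
    \<le> lagrangian C t A B lam \<eta> m \<alpha>"
proof -
  define c where "c = lam * \<eta>"
  define v where "v k = (\<Sum>a\<in>A. C k a * \<alpha> a) - lam" for k
  define T where "T = (\<Sum>a\<in>A. t a * \<alpha> a) - 1 / 4 * (\<Sum>a\<in>A. (\<alpha> a)\<^sup>2)"
  have "0 < c" using assms unfolding c_def by simp
  have "dual_obj C t A B lam \<eta> \<alpha> + lam * \<eta> / 2 * (\<Sum>k\<in>B. (m k - dual_point C A lam \<eta> \<alpha> k)\<^sup>2)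
      = T + (\<Sum>k\<in>B. - c / 2 * (pospart (v k) / c)\<^sup>2 + c / 2 * (m k - pospart (v k) / c)\<^sup>2)"
    unfolding dual_obj_def dual_point_def T_def c_def v_def
    by (simp add: sum.distrib sum_distrib_left sum_negf sum_subtractf)
  also have "\<dots> \<le> T + (\<Sum>k\<in>B. c / 2 * (m k)\<^sup>2 - v k * m k)"
    using \<open>0 < c\<close> assms(3) by (intro add_left_mono sum_mono quadratic_ge_nonneg_min) auto
  also have "\<dots> = lagrangian C t A B lam \<eta> m \<alpha>"
    unfolding lagrangian_eq_sum_coordinates T_def c_def v_def ..
  finally show ?thesis .
qed

lemma lagrangian_eq_dual_obj:
  assumes "0 < lam" "0 < \<eta>" "\<forall>k\<in>B. m k = dual_point C A lam \<eta> \<alpha> k"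
  shows "lagrangian C t A B lam \<eta> m \<alpha> = dual_obj C t A B lam \<eta> \<alpha>"
proof -
  define c where "c = lam * \<eta>"
  define v where "v k = (\<Sum>a\<in>A. C k a * \<alpha> a) - lam" for k
  define T where "T = (\<Sum>a\<in>A. t a * \<alpha> a) - 1 / 4 * (\<Sum>a\<in>A. (\<alpha> a)\<^sup>2)"
  have "0 < c" using assms unfolding c_def by simp
  have m_eq: "\<forall>k\<in>B. m k = pospart (v k) / c"
    using assms(3) unfolding dual_point_def c_def v_def .
  have "lagrangian C t A B lam \<eta> m \<alpha> = T + (\<Sum>k\<in>B. c / 2 * (m k)\<^sup>2 - v k * m k)"
    unfolding lagrangian_eq_sum_coordinates T_def c_def v_def ..
  also have "\<dots> = T + (\<Sum>k\<in>B. - c / 2 * (pospart (v k) / c)\<^sup>2)"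
  proof -
    have "c / 2 * (m k)\<^sup>2 - v k * m k = - c / 2 * (pospart (v k) / c)\<^sup>2" if "k \<in> B" for k
      using m_eq that quadratic_at_nonneg_min[OF \<open>0 < c\<close>, of "v k"] by simp
    then show ?thesis by simp
  qed
  also have "\<dots> = dual_obj C t A B lam \<eta> \<alpha>"
    unfolding dual_obj_def dual_point_def T_def c_def v_def
    by (simp add: sum_distrib_left sum_negf)
  finally show ?thesis .
qed

lemma dual_obj_gap_le_primal_obj:
  assumes "0 < lam" "0 < \<eta>" "\<forall>a\<in>A. 0 \<le> \<alpha> a" "\<forall>k\<in>B. 0 \<le> m k"
  shows "dual_obj C t A B lam \<eta> \<alpha> + lam * \<eta> / 2 * (\<Sum>k\<in>B. (m k - dual_point C A lam \<eta> \<alpha> k)\<^sup>2)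
    \<le> primal_obj C t A B lam \<eta> m"
  using dual_obj_gap_le_lagrangian[OF assms(1,2,4)] lagrangian_le_primal_obj[OF assms(3)]
  by (rule order_trans)

lemma nonneg_if_quadratic_nonneg:
  fixes g Q \<epsilon> :: real
  assumes "0 < \<epsilon>" and quad: "\<And>h. 0 < h \<Longrightarrow> h \<le> \<epsilon> \<Longrightarrow> 0 \<le> h * g + h\<^sup>2 * Q"
  shows "0 \<le> g"
proof (rule ccontr)
  assume "\<not> 0 \<le> g"
  define h where "h = min \<epsilon> (- g / (2 * (\<bar>Q\<bar> + 1)))"
  have "0 < - g / (2 * (\<bar>Q\<bar> + 1))"
    using \<open>\<not> 0 \<le> g\<close> by (intro divide_pos_pos) auto
  then have h: "0 < h" "h \<le> \<epsilon>"
    using assms(1) unfolding h_def by auto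
  have "h * \<bar>Q\<bar> \<le> - g / (2 * (\<bar>Q\<bar> + 1)) * \<bar>Q\<bar>"
    unfolding h_def by (intro mult_right_mono) auto
  also have "\<dots> < - g"
    using \<open>\<not> 0 \<le> g\<close> mult_neg_pos[of g "\<bar>Q\<bar> + 2"] by (simp add: field_simps)
  moreover have "h * Q \<le> h * \<bar>Q\<bar>"
    using h(1) by (simp add: mult_left_mono)
  ultimately have "g + h * Q < 0" by linarith
  then have "h * g + h\<^sup>2 * Q < 0"
    using h(1) mult_pos_neg[of h "g + h * Q"] by (simp add: power2_eq_square algebra_simps)
  with quad[OF h] show False by simp
qed

lemma slack_fun_upd_add:
  assumes "finite B" "j \<in> B"
  shows "slack C t B (m(j := m j + h)) a = slack C t B m a - h * C j a"
proof -
  have "(\<Sum>k\<in>B. C k a * (m(j := m j + h)) k) = C j a * (m j + h) + (\<Sum>k\<in>B - {j}. C k a * m k)"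
    using assms by (simp add: sum.remove)
  also have "\<dots> = (\<Sum>k\<in>B. C k a * m k) + h * C j a"
    using assms by (simp add: sum.remove algebra_simps)
  finally show ?thesis
    unfolding slack_def by simp
qed

lemma primal_obj_fun_upd_add_le:
  assumes "finite B" "j \<in> B"
  shows "primal_obj C t A B lam \<eta> (m(j := m j + h)) \<le> primal_obj C t A B lam \<eta> m
    + h * (lam + lam * \<eta> * m j - (\<Sum>a\<in>A. C j a * (2 * pospart (slack C t B m a))))
    + h\<^sup>2 * ((\<Sum>a\<in>A. (C j a)\<^sup>2) + lam * \<eta> / 2)"
proof -
  let ?s = "slack C t B m"
  have loss: "(\<Sum>a\<in>A. (pospart (slack C t B (m(j := m j + h)) a))\<^sup>2)
      \<le> (\<Sum>a\<in>A. (pospart (?s a))\<^sup>2) - h * (\<Sum>a\<in>A. C j a * (2 * pospart (?s a)))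
        + h\<^sup>2 * (\<Sum>a\<in>A. (C j a)\<^sup>2)"
  proof -
    have "(\<Sum>a\<in>A. (pospart (slack C t B (m(j := m j + h)) a))\<^sup>2)
        \<le> (\<Sum>a\<in>A. (pospart (?s a))\<^sup>2 - 2 * (h * C j a) * pospart (?s a) + (h * C j a)\<^sup>2)"
      unfolding slack_fun_upd_add[OF assms] by (intro sum_mono pospart_sq_diff_le)
    then show ?thesis
      by (simp add: sum.distrib sum_subtractf sum_distrib_left power_mult_distrib mult_ac)
  qed
  have "(\<Sum>k\<in>B. (m(j := m j + h)) k) = (\<Sum>k\<in>B. m k) + h"
    using assms by (simp add: sum.remove)
  moreover have "(\<Sum>k\<in>B. ((m(j := m j + h)) k)\<^sup>2) = (\<Sum>k\<in>B. (m k)\<^sup>2) + 2 * h * m j + h\<^sup>2"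
    using assms by (simp add: sum.remove power2_eq_square algebra_simps)
  ultimately show ?thesis
    using loss unfolding primal_obj_def by (simp add: power2_eq_square algebra_simps)
qed

lemma primal_minimizer_optimality:
  assumes "finite B" "0 < lam" "0 < \<eta>" "j \<in> B"
    and m_nonneg: "\<forall>k\<in>B. 0 \<le> m k"
    and m_min: "\<forall>m'. (\<forall>k\<in>B. 0 \<le> m' k) \<longrightarrow> primal_obj C t A B lam \<eta> m \<le> primal_obj C t A B lam \<eta> m'"
  shows "m j = dual_point C A lam \<eta> (\<lambda>a. 2 * pospart (slack C t B m a)) j"
proof -
  define v where "v = (\<Sum>a\<in>A. C j a * (2 * pospart (slack C t B m a))) - lam"
  define g where "g = lam * \<eta> * m j - v"
    \<comment> \<open>the derivative of the objective at m along coordinate j\<close>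
  define Q where "Q = (\<Sum>a\<in>A. (C j a)\<^sup>2) + lam * \<eta> / 2"
  have first_order: "0 \<le> h * g + h\<^sup>2 * Q" if "- m j \<le> h" for h
  proof -
    have "\<forall>k\<in>B. 0 \<le> (m(j := m j + h)) k"
      using m_nonneg that by simp
    then have "primal_obj C t A B lam \<eta> m \<le> primal_obj C t A B lam \<eta> (m(j := m j + h))"
      using m_min by blast
    moreover have "h * g = h * (lam + lam * \<eta> * m j - (\<Sum>a\<in>A. C j a * (2 * pospart (slack C t B m a))))"
      unfolding g_def v_def by simp
    ultimately show ?thesis
      using primal_obj_fun_upd_add_le[OF assms(1,4), of C t A lam \<eta> m h] unfolding Q_def by linarith
  qed
  have "0 \<le> m j"
    using m_nonneg assms(4) by blast
  have "0 \<le> g"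
  proof (rule nonneg_if_quadratic_nonneg[of 1])
    show "0 \<le> h * g + h\<^sup>2 * Q" if "0 < h" for h
      using first_order[of h] that \<open>0 \<le> m j\<close> by simp
  qed simp
  have g_nonpos: "g \<le> 0" if "0 < m j"
  proof -
    have "0 \<le> h * - g + h\<^sup>2 * Q" if "0 < h" "h \<le> m j" for h
      using first_order[of "- h"] that by simp
    then show ?thesis
      using nonneg_if_quadratic_nonneg[OF \<open>0 < m j\<close>, of "- g" Q] by simp
  qed
  have "pospart v = lam * \<eta> * m j"
  proof (cases "m j = 0")
    case True
    with \<open>0 \<le> g\<close> show ?thesis by (simp add: g_def pospart_def)
  next
    case False
    with \<open>0 \<le> m j\<close> have "0 < m j" by simp
    with \<open>0 \<le> g\<close> g_nonpos have "v = lam * \<eta> * m j"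
      by (simp add: g_def)
    moreover have "0 < lam * \<eta> * m j"
      using \<open>0 < m j\<close> assms(2,3) by simp
    ultimately show ?thesis by (simp add: pospart_def)
  qed
  then show ?thesis
    using assms(2,3) unfolding dual_point_def v_def by simp
qed

lemma primal_minimizer_eq_dual_point:
  assumes "finite B" "0 < lam" "0 < \<eta>"
    and \<alpha>_nonneg: "\<forall>a\<in>A. 0 \<le> \<alpha> a"
    and \<alpha>_max: "\<forall>\<alpha>'. (\<forall>a\<in>A. 0 \<le> \<alpha>' a) \<longrightarrow> dual_obj C t A B lam \<eta> \<alpha>' \<le> dual_obj C t A B lam \<eta> \<alpha>"
    and m_nonneg: "\<forall>k\<in>B. 0 \<le> m k"
    and m_min: "\<forall>m'. (\<forall>k\<in>B. 0 \<le> m' k) \<longrightarrow> primal_obj C t A B lam \<eta> m \<le> primal_obj C t A B lam \<eta> m'"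
    and "k \<in> B"
  shows "m k = dual_point C A lam \<eta> \<alpha> k"
proof -
  define \<alpha>m where "\<alpha>m a = 2 * pospart (slack C t B m a)" for a
  have "\<forall>k\<in>B. m k = dual_point C A lam \<eta> \<alpha>m k"
    using primal_minimizer_optimality[OF assms(1-3) _ m_nonneg m_min] unfolding \<alpha>m_def by blast
  then have "lagrangian C t A B lam \<eta> m \<alpha>m = dual_obj C t A B lam \<eta> \<alpha>m"
    by (rule lagrangian_eq_dual_obj[OF assms(2,3)])
  then have "primal_obj C t A B lam \<eta> m = dual_obj C t A B lam \<eta> \<alpha>m"
    unfolding \<alpha>m_def lagrangian_eq_primal_obj .
  also have "\<dots> \<le> dual_obj C t A B lam \<eta> \<alpha>"
    using \<alpha>_max by (simp add: \<alpha>m_def pospart_def)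
  finally have "lam * \<eta> / 2 * (\<Sum>k\<in>B. (m k - dual_point C A lam \<eta> \<alpha> k)\<^sup>2) \<le> 0"
    using dual_obj_gap_le_primal_obj[OF assms(2,3) \<alpha>_nonneg m_nonneg, of C t] by linarith
  moreover have "0 < lam * \<eta> / 2"
    using assms(2,3) by simp
  ultimately have "(\<Sum>k\<in>B. (m k - dual_point C A lam \<eta> \<alpha> k)\<^sup>2) \<le> 0"
    by (metis mult_le_cancel_left_pos mult_zero_right)
  then have "(\<Sum>k\<in>B. (m k - dual_point C A lam \<eta> \<alpha> k)\<^sup>2) = 0"
    by (simp add: order.antisym sum_nonneg)
  then show ?thesis
    using assms(1,8) by (simp add: sum_nonneg_eq_0_iff)
qed

lemma sum_mult_le_on_ball:
  fixes c \<alpha> q :: "'a \<Rightarrow> real"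
  assumes "(\<Sum>a\<in>A. (\<alpha> a - q a)\<^sup>2) \<le> r\<^sup>2" "0 \<le> r"
  shows "(\<Sum>a\<in>A. c a * \<alpha> a) \<le> (\<Sum>a\<in>A. c a * q a) + r * sqrt (\<Sum>a\<in>A. (c a)\<^sup>2)"
proof -
  have "L2_set (\<lambda>a. \<alpha> a - q a) A \<le> r"
    using real_sqrt_le_mono[OF assms(1)] assms(2) unfolding L2_set_def by simp
  have "(\<Sum>a\<in>A. c a * (\<alpha> a - q a)) \<le> (\<Sum>a\<in>A. \<bar>c a\<bar> * \<bar>\<alpha> a - q a\<bar>)"
    by (intro sum_mono) (simp flip: abs_mult)
  also have "\<dots> \<le> L2_set c A * L2_set (\<lambda>a. \<alpha> a - q a) A"
    by (rule L2_set_mult_ineq)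
  also have "\<dots> \<le> L2_set c A * r"
    using \<open>L2_set (\<lambda>a. \<alpha> a - q a) A \<le> r\<close> by (simp add: mult_left_mono)
  finally have "(\<Sum>a\<in>A. c a * (\<alpha> a - q a)) \<le> L2_set c A * r" .
  then show ?thesis
    unfolding L2_set_def by (simp add: right_diff_distrib sum_subtractf mult.commute)
qed

lemma sum_pairs:
  assumes "\<And>i. i \<in> {1..n} \<Longrightarrow> finite (D i) \<and> finite (S i)"
  shows "sum f (pairs n D S) = (\<Sum>i\<in>{1..n}. (\<Sum>l\<in>D i. f (Inl (i, l))) + (\<Sum>j\<in>S i. f (Inr (i, j))))"
proof -
  have fin: "finite (Sigma {1..n} D)" "finite (Sigma {1..n} S)"
    using assms by auto
  have "pairs n D S = Inl ` Sigma {1..n} D \<union> Inr ` Sigma {1..n} S"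
    unfolding pairs_def by auto
  then have "sum f (pairs n D S) = sum f (Inl ` Sigma {1..n} D) + sum f (Inr ` Sigma {1..n} S)"
    by (simp only:) (rule sum.union_disjoint, use fin in auto)
  then show ?thesis
    using assms by (simp add: sum.reindex sum.Sigma sum.distrib)
qed

lemma Pobj_eq_primal_obj:
  assumes "\<And>i. i \<in> {1..n} \<Longrightarrow> finite (D i) \<and> finite (S i)"
  shows "Pobj n p x D S L U \<eta> lam m = primal_obj (Cmat x) (tvec L U) (pairs n D S) {1..p} lam \<eta> m"
proof -
  have "(pospart (slack (Cmat x) (tvec L U) {1..p} m (Inl (i, l))))\<^sup>2 = ell L (\<Sum>k = 1..p. m k * cvec x i l k)"
    and "(pospart (slack (Cmat x) (tvec L U) {1..p} m (Inr (i, l))))\<^sup>2 = ell (- U) (- (\<Sum>k = 1..p. m k * cvec x i l k))"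
    for i l by (simp_all add: slack_def ell_def Cmat_def tvec_def mult.commute sum_negf)
  moreover note sum_pairs[OF assms, where f = "\<lambda>a. (pospart (slack (Cmat x) (tvec L U) {1..p} m a))\<^sup>2"]
  ultimately show ?thesis
    unfolding Pobj_def primal_obj_def by simp
qed

lemma Dobj_eq_dual_obj:
  "Dobj n p x D S L U \<eta> lam \<alpha> = dual_obj (Cmat x) (tvec L U) (pairs n D S) {1..p} lam \<eta> \<alpha>"
  by (simp add: Dobj_def dual_obj_def mlam_def dual_point_def)

theorem theorem4:
  fixes n K p :: nat
    and x :: "nat \<Rightarrow> nat \<Rightarrow> real"
    and D S :: "nat \<Rightarrow> nat set"
    and L U \<eta> lam r :: real
    and \<alpha>s q :: "pidx \<Rightarrow> real"
    and ms :: "nat \<Rightarrow> real"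
    and k :: nat
  assumes "n \<ge> 1" and "K \<ge> 1" and "p \<ge> 1"
    and "\<And>i k. i \<in> {1..n} \<Longrightarrow> k \<in> {1..p} \<Longrightarrow> x i k \<ge> 0"
    and "\<And>i. i \<in> {1..n} \<Longrightarrow> D i \<subseteq> {1..n} \<and> card (D i) = K"
    and "\<And>i. i \<in> {1..n} \<Longrightarrow> S i \<subseteq> {1..n} \<and> card (S i) = K"
    and "L \<ge> U" and "U \<ge> 0" and "\<eta> > 0" and "lam > 0"
    and dual_opt: "(\<forall>a\<in>pairs n D S. \<alpha>s a \<ge> 0) \<and>
        (\<forall>\<alpha>. (\<forall>a\<in>pairs n D S. \<alpha> a \<ge> 0) \<longrightarrow>
              Dobj n p x D S L U \<eta> lam \<alpha> \<le> Dobj n p x D S L U \<eta> lam \<alpha>s)"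
    and primal_opt: "(\<forall>j\<in>{1..p}. ms j \<ge> 0) \<and>
        (\<forall>m. (\<forall>j\<in>{1..p}. m j \<ge> 0) \<longrightarrow>
              Pobj n p x D S L U \<eta> lam ms \<le> Pobj n p x D S L U \<eta> lam m)"
    and "r \<ge> 0"
    and "(\<Sum>a\<in>pairs n D S. (\<alpha>s a - q a)\<^sup>2) \<le> r\<^sup>2"
    and "k \<in> {1..p}"
    and "(\<Sum>a\<in>pairs n D S. Cmat x k a * q a)
           + r * sqrt (\<Sum>a\<in>pairs n D S. (Cmat x k a)\<^sup>2) \<le> lam"
  shows "ms k = 0"
proof -
  let ?C = "Cmat x" and ?t = "tvec L U" and ?A = "pairs n D S" and ?B = "{1..p}"
  have "finite (D i) \<and> finite (S i)" if "i \<in> {1..n}" for i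
    using assms(5,6)[OF that] by (meson finite_atLeastAtMost finite_subset)
  then have primal: "Pobj n p x D S L U \<eta> lam m = primal_obj ?C ?t ?A ?B lam \<eta> m" for m
    by (rule Pobj_eq_primal_obj)
  have "ms k = dual_point ?C ?A lam \<eta> \<alpha>s k"
  proof (rule primal_minimizer_eq_dual_point)
    show "\<forall>a\<in>?A. 0 \<le> \<alpha>s a"
      and "\<forall>\<alpha>. (\<forall>a\<in>?A. 0 \<le> \<alpha> a) \<longrightarrow> dual_obj ?C ?t ?A ?B lam \<eta> \<alpha> \<le> dual_obj ?C ?t ?A ?B lam \<eta> \<alpha>s"
      using dual_opt unfolding Dobj_eq_dual_obj by blast+
    show "\<forall>j\<in>?B. 0 \<le> ms j"
      and "\<forall>m. (\<forall>j\<in>?B. 0 \<le> m j) \<longrightarrow> primal_obj ?C ?t ?A ?B lam \<eta> ms \<le> primal_obj ?C ?t ?A ?B lam \<eta> m"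
      using primal_opt unfolding primal by blast+
  qed (use assms(9,10,15) in auto)
  moreover have "(\<Sum>a\<in>?A. ?C k a * \<alpha>s a) \<le> lam"
    using sum_mult_le_on_ball[of \<alpha>s q ?A r "?C k"] assms(13,14,16) by linarith
  ultimately show ?thesis
    unfolding dual_point_def pospart_def by simp
qed

end
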